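(* Let $G$ be a median graph, let $p,q$ be vertices of $G$, and let $k$ be the largest dimension of a cube subgraph of the subgraph $G(I(p,q))$ induced by $I(p,q)$. Then (i) for every vertex $v\in I(p,q)$ and any $m$ distinct neighbors $y_1,\dots,y_m$ of $v$ lying in $I(v,q)$, there is an $m$-dimensional cube subgraph of $G$ contained in $I(v,q)$ and containing $v,y_1,\dots,y_m$; and (ii) $G(I(p,q))$ admits an isometric embedding into the $k$-dimensional grid $\mathbb Z^k=\prod_{i=1}^k P_i$ (Cartesian product of $k$ two-way infinite paths, with its graph metric).
   Context: A median graph is a connected graph in which for every three vertices $u,v,w$ the set $I(u,v)\cap I(v,w)\cap I(w,u)$ consists of a single vertex, where $I(a,b)=\{z:d_G(a,z)+d_G(z,b)=d_G(a,b)\}$ and $d_G$ is the graph distance. $G(S)$ denotes the subgraph induced by a vertex set $S$. An $m$-dimensional cube subgraph is a subgraph isomorphic to the hypercube graph $Q_m$. An isometric embedding of graphs is a map $f$ with $d(f(a),f(b))=d_G(a,b)$ for all vertices $a,b$. *)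

theory Defs
  imports Main
begin

definition simple_graph :: "'a set \<Rightarrow> ('a \<Rightarrow> 'a \<Rightarrow> bool) \<Rightarrow> bool" where
  "simple_graph V E \<longleftrightarrow> (\<forall>x y. E x y \<longrightarrow> x \<in> V \<and> y \<in> V) \<and>
      (\<forall>x y. E x y \<longrightarrow> E y x) \<and> (\<forall>x. \<not> E x x)"

definition walk :: "'a set \<Rightarrow> ('a \<Rightarrow> 'a \<Rightarrow> bool) \<Rightarrow> 'a list \<Rightarrow> bool" where
  "walk V E xs \<longleftrightarrow> xs \<noteq> [] \<and> set xs \<subseteq> V \<and> successively E xs"

definition connected_graph :: "'a set \<Rightarrow> ('a \<Rightarrow> 'a \<Rightarrow> bool) \<Rightarrow> bool" where
  "connected_graph V E \<longleftrightarrow>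
     (\<forall>a\<in>V. \<forall>b\<in>V. \<exists>xs. walk V E xs \<and> hd xs = a \<and> last xs = b)"

definition gdist :: "'a set \<Rightarrow> ('a \<Rightarrow> 'a \<Rightarrow> bool) \<Rightarrow> 'a \<Rightarrow> 'a \<Rightarrow> nat" where
  "gdist V E a b = (LEAST n. \<exists>xs. walk V E xs \<and> hd xs = a \<and> last xs = b \<and> length xs = Suc n)"

definition interval :: "'a set \<Rightarrow> ('a \<Rightarrow> 'a \<Rightarrow> bool) \<Rightarrow> 'a \<Rightarrow> 'a \<Rightarrow> 'a set" where
  "interval V E a b = {z \<in> V. gdist V E a z + gdist V E z b = gdist V E a b}"

definition median_graph :: "'a set \<Rightarrow> ('a \<Rightarrow> 'a \<Rightarrow> bool) \<Rightarrow> bool" where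
  "median_graph V E \<longleftrightarrow> simple_graph V E \<and> connected_graph V E \<and>
     (\<forall>u\<in>V. \<forall>v\<in>V. \<forall>w\<in>V. \<exists>!x. x \<in> interval V E u v \<inter> interval V E v w \<inter> interval V E w u)"

definition induced_adj :: "('a \<Rightarrow> 'a \<Rightarrow> bool) \<Rightarrow> 'a set \<Rightarrow> 'a \<Rightarrow> 'a \<Rightarrow> bool" where
  "induced_adj E S x y \<longleftrightarrow> E x y \<and> x \<in> S \<and> y \<in> S"

text \<open>Hypercube Q_m: vertices are the subsets of {0..<m}, adjacent iff they differ in one element.\<close>
definition cube_verts :: "nat \<Rightarrow> nat set set" where
  "cube_verts m = Pow {..<m}"

definition cube_adj :: "nat set \<Rightarrow> nat set \<Rightarrow> bool" where
  "cube_adj A B \<longleftrightarrow> card ((A - B) \<union> (B - A)) = 1"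

text \<open>f is an isomorphism from Q_m onto a subgraph of (V,E) whose vertex set lies in S.
  (A subgraph isomorphic to Q_m is exactly the image of such an f.)\<close>
definition cube_subgraph_map :: "'a set \<Rightarrow> ('a \<Rightarrow> 'a \<Rightarrow> bool) \<Rightarrow> nat \<Rightarrow> (nat set \<Rightarrow> 'a) \<Rightarrow> bool" where
  "cube_subgraph_map V E m f \<longleftrightarrow> inj_on f (cube_verts m) \<and> f ` cube_verts m \<subseteq> V \<and>
     (\<forall>A\<in>cube_verts m. \<forall>B\<in>cube_verts m. cube_adj A B \<longrightarrow> E (f A) (f B))"

definition has_cube :: "'a set \<Rightarrow> ('a \<Rightarrow> 'a \<Rightarrow> bool) \<Rightarrow> nat \<Rightarrow> bool" where
  "has_cube V E m \<longleftrightarrow> (\<exists>f. cube_subgraph_map V E m f)"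

text \<open>The k-dimensional grid Z^k (Cartesian product of k two-way infinite paths):
  vertices are integer vectors (functions nat => int vanishing outside {0..<k}),
  adjacent iff they differ in exactly one coordinate, by exactly 1.\<close>
definition grid_verts :: "nat \<Rightarrow> (nat \<Rightarrow> int) set" where
  "grid_verts k = {x. \<forall>i\<ge>k. x i = 0}"

definition grid_adj :: "nat \<Rightarrow> (nat \<Rightarrow> int) \<Rightarrow> (nat \<Rightarrow> int) \<Rightarrow> bool" where
  "grid_adj k x y \<longleftrightarrow> x \<in> grid_verts k \<and> y \<in> grid_verts k \<and>
     (\<exists>i<k. \<bar>x i - y i\<bar> = 1 \<and> (\<forall>j. j \<noteq> i \<longrightarrow> x j = y j))"

definition isometric_embedding ::
  "'a set \<Rightarrow> ('a \<Rightarrow> 'a \<Rightarrow> bool) \<Rightarrow> 'b set \<Rightarrow> ('b \<Rightarrow> 'b \<Rightarrow> bool) \<Rightarrow> ('a \<Rightarrow> 'b) \<Rightarrow> bool" where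
  "isometric_embedding V E W F f \<longleftrightarrow> f ` V \<subseteq> W \<and>
     (\<forall>a\<in>V. \<forall>b\<in>V. gdist W F (f a) (f b) = gdist V E a b)"

end

theory Submission
  imports Defs
begin

text \<open>
  The proof uses Djokovi\'c--Winkler half-spaces. After basic facts on distances defined via
  walks, we show that in a median graph the half-spaces \<open>W a b\<close> of edges behave like
  coordinates of a hypercube: an edge leaving a half-space determines it, the half-spaces
  separating \<open>x\<close> from \<open>y\<close> are exactly \<open>d x y\<close> many, and distances are symmetric differences
  of separator sets seen from a base point. Seen from \<open>p\<close>, the interval \<open>I(p,q)\<close> is closed
  under unions of separator sets (the median with \<open>q\<close> is a join); this produces, from \<open>m\<close>
  neighbours of \<open>v\<close> towards \<open>q\<close>, an \<open>m\<close>-cube, which is part (i).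
  For part (ii) the half-spaces separating \<open>p\<close> from \<open>q\<close> are partially ordered; their
  down-sets are the separator sets of vertices of \<open>I(p,q)\<close>, so an antichain yields a cube and
  the width is at most \<open>k\<close>. Dilworth's theorem covers the poset by \<open>k\<close> chains, and counting
  crossed half-spaces per chain gives grid coordinates whose \<open>\<ell>\<^sub>1\<close>-distance is the distance
  in the (convex) interval.
\<close>

section \<open>Distances defined by walks\<close>

lemma walk_singleton [simp]: "walk W F [x] \<longleftrightarrow> x \<in> W"
  by (simp add: walk_def)

lemma walk_Cons_Cons [simp]: "walk W F (x # y # xs) \<longleftrightarrow> x \<in> W \<and> F x y \<and> walk W F (y # xs)"
  by (auto simp: walk_def)

lemma gdist_less_length:
  assumes "walk W F xs" "hd xs = a" "last xs = b"
  shows "gdist W F a b < length xs"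
proof -
  have ne: "xs \<noteq> []" using assms(1) by (simp add: walk_def)
  then have "\<exists>ys. walk W F ys \<and> hd ys = a \<and> last ys = b \<and> length ys = Suc (length xs - 1)"
    using assms by (intro exI[of _ xs]) auto
  then have "gdist W F a b \<le> length xs - 1" unfolding gdist_def by (rule Least_le)
  with ne show ?thesis by (cases xs) auto
qed

lemma shortest_walk_exists:
  assumes "walk W F xs" "hd xs = a" "last xs = b"
  shows "\<exists>ys. walk W F ys \<and> hd ys = a \<and> last ys = b \<and> length ys = Suc (gdist W F a b)"
proof -
  have "xs \<noteq> []" using assms(1) by (simp add: walk_def)
  then have "\<exists>n ys. walk W F ys \<and> hd ys = a \<and> last ys = b \<and> length ys = Suc n"
    using assms by (intro exI[of _ "length xs - 1"] exI[of _ xs]) auto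
  then show ?thesis unfolding gdist_def by (rule LeastI_ex)
qed

lemma gdist_potential:
  assumes zW: "z \<in> W"
    and lipschitz: "\<And>x y. F x y \<Longrightarrow> \<delta> x \<le> Suc (\<delta> y)"
    and descent: "\<And>x. x \<in> W \<Longrightarrow> \<delta> x \<noteq> 0 \<Longrightarrow> \<exists>y\<in>W. F x y \<and> \<delta> x = Suc (\<delta> y)"
    and zero: "\<And>x. x \<in> W \<Longrightarrow> \<delta> x = 0 \<Longrightarrow> x = z"
    and dz: "\<delta> z = 0"
    and xW: "x \<in> W"
  shows "gdist W F x z = \<delta> x"
proof -
  have lower: "\<delta> x < length (x # ys)" if "walk W F (x # ys)" "last (x # ys) = z" for ys x
    using that
  proof (induction ys arbitrary: x)
    case Nil then show ?case using dz by simp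
  next
    case (Cons y ys)
    then have "F x y" "\<delta> y < length (y # ys)" by auto
    with lipschitz[OF \<open>F x y\<close>] show ?case by simp
  qed
  have upper: "\<exists>ys. walk W F ys \<and> hd ys = x \<and> last ys = z \<and> length ys = Suc n"
    if "x \<in> W" "\<delta> x = n" for n x
    using that
  proof (induction n arbitrary: x)
    case 0 then show ?case using zero by (intro exI[of _ "[x]"]) auto
  next
    case (Suc n)
    then obtain y where y: "y \<in> W" "F x y" "\<delta> x = Suc (\<delta> y)" using descent by fastforce
    then obtain ys where ys: "walk W F ys" "hd ys = y" "last ys = z" "length ys = Suc n"
      using Suc by auto
    then obtain r where "ys = y # r" by (cases ys) auto
    then show ?case using ys y Suc.prems by (intro exI[of _ "x # ys"]) auto
  qed
  obtain ys where ys: "walk W F ys" "hd ys = x" "last ys = z" "length ys = Suc (\<delta> x)"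
    using upper[OF xW refl] by blast
  have "gdist W F x z \<le> \<delta> x" using gdist_less_length[OF ys(1-3)] ys(4) by simp
  moreover obtain zs where zs: "walk W F zs" "hd zs = x" "last zs = z"
    "length zs = Suc (gdist W F x z)"
    using shortest_walk_exists[OF ys(1-3)] by blast
  moreover obtain r where "zs = x # r" using zs by (cases zs) (auto simp: walk_def)
  ultimately show ?thesis using lower[of x r] by simp
qed

section \<open>Metric facts in median graphs\<close>

locale median =
  fixes V :: "'a set" and E :: "'a \<Rightarrow> 'a \<Rightarrow> bool"
  assumes median: "median_graph V E"
begin

abbreviation "d \<equiv> gdist V E"
abbreviation "Itv \<equiv> interval V E"

lemma adj_in_V: "E a b \<Longrightarrow> a \<in> V \<and> b \<in> V"
  using median by (simp add: median_graph_def simple_graph_def)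

lemma adj_sym: "E a b \<Longrightarrow> E b a"
  using median by (simp add: median_graph_def simple_graph_def)

lemma adj_irrefl: "\<not> E a a"
  using median by (simp add: median_graph_def simple_graph_def)

lemma shortest_path:
  assumes "a \<in> V" "b \<in> V"
  shows "\<exists>ys. walk V E ys \<and> hd ys = a \<and> last ys = b \<and> length ys = Suc (d a b)"
  using assms median shortest_walk_exists
  unfolding median_graph_def connected_graph_def by metis

lemma dist_self [simp]: "a \<in> V \<Longrightarrow> d a a = 0"
  using gdist_less_length[of V E "[a]" a a] by simp

lemma dist_eq_0D:
  assumes "a \<in> V" "b \<in> V" "d a b = 0"
  shows "a = b"
proof -
  obtain ys where "walk V E ys" "hd ys = a" "last ys = b" "length ys = Suc 0"
    using shortest_path assms by force
  then show ?thesis by (cases ys) auto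
qed

lemma dist_adj_le:
  assumes "E a b" "c \<in> V"
  shows "d a c \<le> Suc (d b c)"
proof -
  obtain ys where ys: "walk V E ys" "hd ys = b" "last ys = c" "length ys = Suc (d b c)"
    using shortest_path assms adj_in_V by blast
  then obtain r where r: "ys = b # r" by (cases ys) (auto simp: walk_def)
  have "walk V E (a # ys)" using ys r assms adj_in_V by auto
  then have "d a c < length (a # ys)" using gdist_less_length[of V E "a # ys" a c] ys r by auto
  then show ?thesis using ys by simp
qed

lemma dist_SucE:
  assumes "a \<in> V" "b \<in> V" "d a b = Suc n"
  shows "\<exists>c. E a c \<and> d c b = n"
proof -
  obtain ys where ys: "walk V E ys" "hd ys = a" "last ys = b" "length ys = Suc (Suc n)"
    using shortest_path assms by force
  then obtain c r where r: "ys = a # c # r" by (cases ys; cases "tl ys") auto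
  then have "E a c" "walk V E (c # r)" using ys by auto
  then have "d c b \<le> n" using gdist_less_length[of V E "c # r" c b] ys r by auto
  moreover have "Suc n \<le> Suc (d c b)" using dist_adj_le[OF \<open>E a c\<close> assms(2)] assms by simp
  ultimately show ?thesis using \<open>E a c\<close> by auto
qed

lemma dist_triangle:
  assumes "a \<in> V" "b \<in> V" "c \<in> V"
  shows "d a c \<le> d a b + d b c"
  using assms
proof (induction "d a b" arbitrary: a)
  case 0 then show ?case using dist_eq_0D by fastforce
next
  case (Suc n)
  then obtain a' where "E a a'" "d a' b = n" using dist_SucE by metis
  then have "d a' c \<le> d a' b + d b c" using Suc adj_in_V by auto
  then show ?case using dist_adj_le[OF \<open>E a a'\<close> \<open>c \<in> V\<close>] \<open>d a' b = n\<close> Suc.hyps by simp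
qed

lemma dist_sym:
  assumes "a \<in> V" "b \<in> V"
  shows "d a b = d b a"
proof -
  have le: "d b a \<le> d a b" if "a \<in> V" "b \<in> V" for a b
    using that
  proof (induction "d a b" arbitrary: a)
    case 0 then show ?case using dist_eq_0D by fastforce
  next
    case (Suc n)
    then obtain c where c: "E a c" "d c b = n" using dist_SucE by metis
    then have "d b c \<le> n" using Suc adj_in_V by auto
    moreover have "d b a \<le> d b c + d c a" using dist_triangle Suc adj_in_V c by blast
    moreover have "d c a \<le> 1" using dist_adj_le[OF adj_sym[OF c(1)]] adj_in_V c by fastforce
    ultimately show ?case using Suc.hyps by simp
  qed
  show ?thesis using le[OF assms] le[OF assms(2,1)] by simp
qed

lemma dist_adj: "E a b \<Longrightarrow> d a b = 1"
  using dist_adj_le[of a b b] dist_eq_0D[of a b] adj_in_V adj_irrefl by fastforce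

lemma dist_1_adj:
  assumes "a \<in> V" "b \<in> V" "d a b = 1"
  shows "E a b"
proof -
  obtain ys where ys: "walk V E ys" "hd ys = a" "last ys = b" "length ys = Suc 1"
    using shortest_path assms by force
  then obtain c r where "ys = a # c # r" by (cases ys; cases "tl ys") auto
  then show ?thesis using ys by auto
qed

lemma dist_to_adj_le: "E a b \<Longrightarrow> c \<in> V \<Longrightarrow> d c a \<le> Suc (d c b)"
  using dist_adj_le dist_sym adj_in_V by simp

lemma interval_subset_V: "Itv a b \<subseteq> V"
  by (auto simp: interval_def)

lemma interval_sym: "a \<in> V \<Longrightarrow> b \<in> V \<Longrightarrow> Itv a b = Itv b a"
  by (auto simp: interval_def dist_sym)

lemma interval_left: "a \<in> V \<Longrightarrow> b \<in> V \<Longrightarrow> a \<in> Itv a b"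
  by (simp add: interval_def)

lemma interval_right: "a \<in> V \<Longrightarrow> b \<in> V \<Longrightarrow> b \<in> Itv a b"
  by (simp add: interval_def)

lemma interval_shrink:
  assumes "u \<in> V" "w \<in> V" "a \<in> Itv u w" "b \<in> Itv a w"
  shows "b \<in> Itv u w" "a \<in> Itv u b"
proof -
  have V: "a \<in> V" "b \<in> V" using assms interval_subset_V by auto
  have 1: "d u a + d a w = d u w" "d a b + d b w = d a w" using assms by (auto simp: interval_def)
  have "d u b \<le> d u a + d a b" "d u w \<le> d u b + d b w" using dist_triangle V assms by auto
  then show "b \<in> Itv u w" "a \<in> Itv u b" using 1 V by (auto simp: interval_def)
qed

lemma interval_subset:
  assumes "u \<in> V" "w \<in> V" "a \<in> Itv u w"
  shows "Itv a w \<subseteq> Itv u w" "Itv u a \<subseteq> Itv u w"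
proof -
  have aV: "a \<in> V" using assms interval_subset_V by auto
  show "Itv a w \<subseteq> Itv u w" using interval_shrink(1)[OF assms] by blast
  have "a \<in> Itv w u" using assms interval_sym by auto
  then show "Itv u a \<subseteq> Itv u w"
    using interval_shrink(1)[OF assms(2,1)] interval_sym aV assms by auto
qed

lemma geodesic_step:
  assumes "a \<in> V" "b \<in> V" "a \<noteq> b"
  shows "\<exists>y. E a y \<and> y \<in> Itv a b"
proof -
  obtain n where "d a b = Suc n" using assms dist_eq_0D by (cases "d a b") auto
  then obtain y where "E a y" "d y b = n" using dist_SucE assms by blast
  then show ?thesis using dist_adj \<open>d a b = Suc n\<close> adj_in_V by (auto simp: interval_def)
qed

lemma median_exists:
  assumes "a \<in> V" "b \<in> V" "c \<in> V"
  shows "\<exists>m. m \<in> Itv a b \<and> m \<in> Itv b c \<and> m \<in> Itv c a"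
  using median assms unfolding median_graph_def by blast

lemma median_unique:
  assumes "a \<in> V" "b \<in> V" "c \<in> V"
    "m \<in> Itv a b" "m \<in> Itv b c" "m \<in> Itv c a"
    "m' \<in> Itv a b" "m' \<in> Itv b c" "m' \<in> Itv c a"
  shows "m = m'"
  using median assms unfolding median_graph_def by blast

lemma bipartite:
  assumes "E a b" "c \<in> V"
  shows "d c a \<noteq> d c b"
proof
  assume eq: "d c a = d c b"
  have V: "a \<in> V" "b \<in> V" using adj_in_V assms by auto
  obtain m where m: "m \<in> Itv a b" "m \<in> Itv b c" "m \<in> Itv c a" using median_exists V assms by blast
  have "d a m + d m b = 1" using m dist_adj assms by (auto simp: interval_def)
  then have "d a m = 0 \<or> d m b = 0" by arith
  then have "m = a \<or> m = b" using dist_eq_0D m interval_subset_V V by blast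
  then show False
  proof
    assume "m = a"
    then have "d b a + d a c = d b c" using m by (simp add: interval_def)
    then show False using eq dist_adj[OF adj_sym[OF assms(1)]] dist_sym V assms by simp
  next
    assume "m = b"
    then have "d c b + d b a = d c a" using m by (simp add: interval_def)
    then show False using eq dist_adj[OF adj_sym[OF assms(1)]] by simp
  qed
qed

lemma bipartite_Suc:
  assumes "E a b" "c \<in> V"
  shows "d c b = Suc (d c a) \<or> d c a = Suc (d c b)"
  using bipartite[OF assms] dist_to_adj_le[OF assms] dist_to_adj_le[OF adj_sym[OF assms(1)] assms(2)]
  by arith

section \<open>Half-spaces and the Djokovi\'c--Winkler relation\<close>

text \<open>The half-space \<open>W a b\<close> consists of the vertices closer to \<open>a\<close> than to \<open>b\<close>; the
  half-spaces of the graph are those of its edges, and \<open>sep x y\<close> collects the half-spaces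
  containing \<open>y\<close> but not \<open>x\<close>, i.e.\ those crossed when walking from \<open>x\<close> to \<open>y\<close>.\<close>

definition halfspace :: "'a \<Rightarrow> 'a \<Rightarrow> 'a set" where
  "halfspace a b = {x \<in> V. d x a < d x b}"

definition halfspaces :: "'a set set" where
  "halfspaces = {halfspace b a | a b. E a b}"

definition sep :: "'a \<Rightarrow> 'a \<Rightarrow> 'a set set" where
  "sep x y = {H \<in> halfspaces. x \<notin> H \<and> y \<in> H}"

text \<open>By bipartiteness the two half-spaces of an edge partition \<open>V\<close>, so half-spaces are
  closed under complement in \<open>V\<close>.\<close>

lemma halfspace_compl: "E a b \<Longrightarrow> halfspace b a = V - halfspace a b"
  using bipartite unfolding halfspace_def by (auto, metis nat_neq_iff)

lemma halfspace_in_halfspaces: "E a b \<Longrightarrow> halfspace b a \<in> halfspaces"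
  by (auto simp: halfspaces_def)

lemma halfspaces_compl:
  assumes "H \<in> halfspaces"
  shows "V - H \<in> halfspaces"
proof -
  obtain a b where "E a b" "H = halfspace b a" using assms by (auto simp: halfspaces_def)
  then have "V - H = halfspace a b"
    using halfspace_compl[OF \<open>E a b\<close>] by (auto simp: halfspace_def)
  then show ?thesis using halfspace_in_halfspaces[OF adj_sym[OF \<open>E a b\<close>]] by simp
qed

text \<open>Opposite edges \<open>u1 v1\<close>, \<open>u2 v2\<close> of a 4-cycle define the same half-space; the median of
  \<open>u2\<close>, \<open>v1\<close> and an offending vertex would otherwise not be unique.\<close>

lemma square_halfspace_subset:
  assumes e: "E u1 u2" "E v1 v2" "E u1 v1" "E u2 v2" and diag: "d u1 v2 = 2" "d u2 v1 = 2"
  shows "halfspace u1 v1 \<subseteq> halfspace u2 v2"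
proof
  fix z assume z: "z \<in> halfspace u1 v1"
  have V: "u1 \<in> V" "u2 \<in> V" "v1 \<in> V" "v2 \<in> V" "z \<in> V"
    using e adj_in_V z by (auto simp: halfspace_def)
  show "z \<in> halfspace u2 v2"
  proof (rule ccontr)
    assume nz: "z \<notin> halfspace u2 v2"
    have 1: "d z v1 = Suc (d z u1)" using bipartite_Suc[OF e(3) V(5)] z by (auto simp: halfspace_def)
    have 2: "d z u2 = Suc (d z v2)" using bipartite_Suc[OF e(4) V(5)] nz V by (auto simp: halfspace_def)
    have "d z u2 \<le> Suc (d z u1)" "d z v1 \<le> Suc (d z v2)"
      using dist_to_adj_le[OF adj_sym[OF e(1)] V(5)] dist_to_adj_le[OF e(2) V(5)] by auto
    then have t: "d z v2 = d z u1" using 1 2 by simp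
    have a1: "d u1 u2 = 1" "d u1 v1 = 1" "d v2 v1 = 1" "d v2 u2 = 1"
      using dist_adj e adj_sym by auto
    have sy: "d u2 u1 = 1" "d v1 u1 = 1" "d u1 z = d z u1" "d v1 z = d z v1" "d u2 v2 = 1"
      "d v1 v2 = 1" "d v2 z = d z v2"
      using a1 dist_sym V by auto
    have "u1 \<in> Itv u2 v1" "u1 \<in> Itv v1 z" "u1 \<in> Itv z u2"
         "v2 \<in> Itv u2 v1" "v2 \<in> Itv v1 z" "v2 \<in> Itv z u2"
      unfolding interval_def using V a1 diag 1 2 t sy by simp_all
    then have "u1 = v2" using median_unique[of u2 v1 z] V by blast
    then show False using diag V by simp
  qed
qed

lemma square_halfspace_eq:
  assumes e: "E u1 u2" "E v1 v2" "E u1 v1" "E u2 v2" and diag: "d u1 v2 = 2" "d u2 v1 = 2"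
  shows "halfspace u1 v1 = halfspace u2 v2"
  using square_halfspace_subset[OF assms]
    square_halfspace_subset[OF adj_sym[OF e(1)] adj_sym[OF e(2)] e(4) e(3) diag(2) diag(1)]
  by blast

lemma crossing_edge_square:
  assumes ab: "E a b" and xx': "E x x'" and x: "x \<in> halfspace a b" and x': "x' \<in> halfspace b a"
    and xa: "d x a = Suc k"
  obtains x1 w where "E x x1" "E x1 w" "E x' w" "x1 \<in> halfspace a b" "w \<in> halfspace b a"
    "d x1 a = k" "d x w = 2" "d x1 x' = 2"
proof -
  have V: "a \<in> V" "b \<in> V" "x \<in> V" "x' \<in> V" using ab xx' adj_in_V by auto
  have dab: "d a b = 1" using dist_adj ab by auto
  have xb: "d x b = Suc (Suc k)" using bipartite_Suc[OF ab V(3)] x xa by (auto simp: halfspace_def)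
  have x'a: "d x' a = Suc (d x' b)" using bipartite_Suc[OF ab V(4)] x' by (auto simp: halfspace_def)
  have "d x b \<le> Suc (d x' b)" "d x' a \<le> Suc (d x a)"
    using dist_adj_le[OF xx'] dist_adj_le[OF adj_sym[OF xx']] V by auto
  then have x'd: "d x' a = Suc (Suc k)" "d x' b = Suc k" using x'a xb xa by auto
  obtain x1 where x1: "E x x1" "d x1 a = k" using dist_SucE V xa by blast
  have x1V: "x1 \<in> V" using adj_in_V x1 by auto
  have "d x b \<le> Suc (d x1 b)" "d x1 b \<le> d x1 a + d a b"
    using dist_adj_le[OF x1(1) V(2)] dist_triangle V x1V by blast+
  then have x1b: "d x1 b = Suc k" using xb x1 dab by simp
  have "\<not> E x1 x'" using bipartite[of x1 x' b] x1b x'd dist_sym V x1V by auto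
  moreover have "d x1 x' \<le> d x1 x + d x x'" using dist_triangle V x1V by blast
  moreover have "d x1 x = 1" "d x x' = 1" using dist_adj x1 adj_sym xx' by auto
  moreover have "x1 \<noteq> x'" using x1 x'd by auto
  moreover have "d x1 x' \<noteq> 1" "d x1 x' \<noteq> 0"
    using dist_1_adj[OF x1V V(4)] dist_eq_0D[OF x1V V(4)] calculation by auto
  ultimately have dx1x': "d x1 x' = 2" by linarith
  obtain w where w: "w \<in> Itv x1 x'" "w \<in> Itv x' b" "w \<in> Itv b x1"
    using median_exists V x1V by blast
  have wV: "w \<in> V" using w interval_subset_V by auto
  have "d x1 w + d w x' = 2" "d x' w + d w b = Suc k" "d b w + d w x1 = Suc k"
    using w dx1x' x'd x1b dist_sym V x1V by (auto simp: interval_def)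
  then have w2: "d x1 w = 1" "d x' w = 1" "d w b = k" using dist_sym wV V x1V by auto
  have Ew: "E x1 w" "E x' w" using dist_1_adj w2 wV V x1V by auto
  have "d w a \<le> Suc (d x1 a)" "d x' a \<le> Suc (d w a)"
    using dist_adj_le[OF adj_sym[OF Ew(1)] V(1)] dist_adj_le[OF Ew(2) V(1)] by auto
  then have "d w a = Suc k" using x1 x'd by simp
  then have sides: "x1 \<in> halfspace a b" "w \<in> halfspace b a"
    using x1 x1b x1V w2 wV by (simp_all add: halfspace_def)
  have "d x w \<le> d x x1 + d x1 w" "d x b \<le> d x w + d w b"
    using dist_triangle V x1V wV by blast+
  moreover have "d x x1 = 1" using dist_adj x1 by auto
  ultimately have "d x w = 2" using w2 xb by simp
  then show thesis using that x1 Ew sides dx1x' by blast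
qed

text \<open>The Djokovi\'c--Winkler theorem for median graphs: every edge crossing from
  \<open>W a b\<close> to \<open>W b a\<close> defines the same half-space (induction on the distance to \<open>a\<close>,
  moving through the squares above).\<close>

theorem theta_halfspace:
  assumes "E a b" "E x x'" "x \<in> halfspace a b" "x' \<in> halfspace b a"
  shows "halfspace x x' = halfspace a b"
proof -
  have "halfspace x x' = halfspace a b" if "d x a = k" "E x x'" "x \<in> halfspace a b"
    "x' \<in> halfspace b a" for k x x'
    using that
  proof (induction k arbitrary: x x')
    case 0
    have V: "a \<in> V" "x \<in> V" "x' \<in> V" using 0 assms(1) adj_in_V by auto
    then have xa: "x = a" using dist_eq_0D 0 by blast
    then have "d x' a = 1" using dist_adj[OF adj_sym[OF 0(2)]] by simp
    then have "d x' b = 0" using 0(4) by (simp add: halfspace_def)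
    then have "x' = b" using dist_eq_0D V assms(1) adj_in_V by blast
    then show ?case using xa by simp
  next
    case (Suc k)
    obtain x1 w where sq: "E x x1" "E x1 w" "E x' w" "x1 \<in> halfspace a b" "w \<in> halfspace b a"
      "d x1 a = k" "d x w = 2" "d x1 x' = 2"
      using crossing_edge_square[OF assms(1) Suc.prems(2-4,1)] by blast
    have "halfspace x x' = halfspace x1 w"
      using square_halfspace_eq[OF sq(1,3) Suc.prems(2) sq(2,7,8)] .
    then show ?case using Suc.IH[OF sq(6,2,4,5)] by simp
  qed
  then show ?thesis using assms by blast
qed

corollary halfspace_of_crossing_edge:
  assumes H: "H \<in> halfspaces" and e: "E x x'" and "x \<notin> H" "x' \<in> H"
  shows "H = halfspace x' x"
proof -
  obtain a b where ab: "E a b" "H = halfspace b a" using H by (auto simp: halfspaces_def)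
  have "x \<in> halfspace a b" using assms ab halfspace_compl[OF ab(1)] adj_in_V by auto
  then have "halfspace x x' = halfspace a b" using theta_halfspace[OF ab(1) e] assms ab by auto
  then show ?thesis using ab halfspace_compl[OF ab(1)] halfspace_compl[OF e] by simp
qed

section \<open>Separating half-spaces measure distances\<close>

lemma sep_step:
  assumes e: "E x x'" and y: "y \<in> halfspace x' x"
  shows "sep x y = insert (halfspace x' x) (sep x' y)" "halfspace x' x \<notin> sep x' y"
proof -
  have V: "x \<in> V" "x' \<in> V" using e adj_in_V by auto
  have xnW: "x \<notin> halfspace x' x" using dist_adj[OF e] by (simp add: halfspace_def)
  have x'W: "x' \<in> halfspace x' x" using dist_adj[OF adj_sym[OF e]] V by (simp add: halfspace_def)
  show "halfspace x' x \<notin> sep x' y" using x'W by (auto simp: sep_def)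
  show "sep x y = insert (halfspace x' x) (sep x' y)"
  proof (intro equalityI subsetI)
    fix H assume H: "H \<in> sep x y"
    then show "H \<in> insert (halfspace x' x) (sep x' y)"
      using halfspace_of_crossing_edge[OF _ e] by (cases "x' \<in> H") (auto simp: sep_def)
  next
    fix H assume H: "H \<in> insert (halfspace x' x) (sep x' y)"
    have "x \<notin> H" if "H \<in> sep x' y"
    proof
      assume "x \<in> H"
      then have "H = halfspace x x'"
        using that halfspace_of_crossing_edge[OF _ adj_sym[OF e]] by (auto simp: sep_def)
      then show False using that y halfspace_compl[OF e] by (auto simp: sep_def)
    qed
    then show "H \<in> sep x y"
      using H halfspace_in_halfspaces[OF e] y xnW by (auto simp: sep_def)
  qed
qed

theorem card_sep:
  assumes "x \<in> V" "y \<in> V"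
  shows "finite (sep x y) \<and> card (sep x y) = d x y"
  using assms
proof (induction "d x y" arbitrary: x)
  case 0
  then have "sep x y = {}" using dist_eq_0D by (auto simp: sep_def)
  then show ?case using 0 by simp
next
  case (Suc n)
  obtain x' where x': "E x x'" "d x' y = n" using dist_SucE Suc by metis
  have x'V: "x' \<in> V" using adj_in_V x' by auto
  have "y \<in> halfspace x' x" using x' Suc dist_sym x'V by (simp add: halfspace_def)
  then show ?case using sep_step[OF x'(1)] Suc.hyps(1)[of x'] x' x'V Suc by auto
qed

lemma sep_finite: "x \<in> V \<Longrightarrow> y \<in> V \<Longrightarrow> finite (sep x y)"
  using card_sep by blast

lemma sep_card: "x \<in> V \<Longrightarrow> y \<in> V \<Longrightarrow> card (sep x y) = d x y"
  using card_sep by blast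

lemma sep_self: "sep x x = {}"
  by (auto simp: sep_def)

lemma sep_interval:
  assumes "x \<in> V" "y \<in> V" "z \<in> Itv x y"
  shows "sep x y = sep x z \<union> sep z y" "sep x z \<inter> sep z y = {}"
proof -
  have zV: "z \<in> V" using assms interval_subset_V by auto
  have sub: "sep x y \<subseteq> sep x z \<union> sep z y" by (auto simp: sep_def)
  have fin: "finite (sep x z)" "finite (sep z y)" "finite (sep x y)" using sep_finite assms zV by auto
  have c: "card (sep x z) + card (sep z y) = card (sep x y)"
    using sep_card assms zV by (auto simp: interval_def)
  have "card (sep x y) \<le> card (sep x z \<union> sep z y)" using card_mono[OF _ sub] fin by auto
  moreover have "card (sep x z \<union> sep z y) + card (sep x z \<inter> sep z y) = card (sep x z) + card (sep z y)"
    using card_Un_Int fin by metis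
  ultimately have "card (sep x z \<inter> sep z y) = 0" "card (sep x y) = card (sep x z \<union> sep z y)"
    using c card_Un_le[of "sep x z" "sep z y"] by linarith+
  then show "sep x z \<inter> sep z y = {}" "sep x y = sep x z \<union> sep z y"
    using fin card_subset_eq[OF _ sub] by auto
qed

text \<open>Distances are symmetric differences of separator sets seen from a fixed base point;
  this is the isometric embedding of a median graph into a hypercube.\<close>

theorem dist_sep_symdiff:
  assumes "p \<in> V" "x \<in> V" "y \<in> V"
  shows "d x y = card ((sep p x - sep p y) \<union> (sep p y - sep p x))"
proof -
  obtain m where m: "m \<in> Itv p x" "m \<in> Itv x y" "m \<in> Itv y p" using median_exists assms by blast
  have mV: "m \<in> V" using m interval_subset_V by auto
  have "m \<in> Itv p y" using m interval_sym assms by auto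
  then have A: "sep p x = sep p m \<union> sep m x" "sep p m \<inter> sep m x = {}"
    and B: "sep p y = sep p m \<union> sep m y" "sep p m \<inter> sep m y = {}"
    using sep_interval[OF assms(1,2) m(1)] sep_interval[OF assms(1,3)] by auto
  have C: "sep m x \<inter> sep m y = {}"
  proof (rule ccontr)
    assume "sep m x \<inter> sep m y \<noteq> {}"
    then obtain H where H: "H \<in> halfspaces" "m \<notin> H" "x \<in> H" "y \<in> H" by (auto simp: sep_def)
    have "V - H \<in> sep x m" using halfspaces_compl[OF H(1)] H mV by (auto simp: sep_def)
    then have "V - H \<in> sep x y" using sep_interval[OF assms(2,3) m(2)] by auto
    then show False using H by (auto simp: sep_def)
  qed
  have "(sep p x - sep p y) \<union> (sep p y - sep p x) = sep m x \<union> sep m y" using A B C by blast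
  moreover have "card (sep m x \<union> sep m y) = d m x + d m y"
    using card_Un_disjoint[OF sep_finite sep_finite C] mV assms sep_card by auto
  moreover have "d x m + d m y = d x y" using m by (auto simp: interval_def)
  ultimately show ?thesis using dist_sym mV assms by simp
qed

lemma sep_inj: "p \<in> V \<Longrightarrow> x \<in> V \<Longrightarrow> y \<in> V \<Longrightarrow> sep p x = sep p y \<Longrightarrow> x = y"
  using dist_sep_symdiff[of p x y] dist_eq_0D by simp

section \<open>Joins in an interval and cubes spanned by neighbours\<close>

text \<open>Seen from \<open>p\<close>, the interval \<open>I(p,q)\<close> is closed under unions of separator sets: the
  median \<open>j\<close> of \<open>x\<close>, \<open>y\<close>, \<open>q\<close> is their join.\<close>

lemma interval_join:
  assumes pq: "p \<in> V" "q \<in> V" and xy: "x \<in> Itv p q" "y \<in> Itv p q"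
  shows "\<exists>j\<in>Itv p q. sep p j = sep p x \<union> sep p y"
proof -
  have V: "x \<in> V" "y \<in> V" using xy interval_subset_V by auto
  obtain j where j: "j \<in> Itv x y" "j \<in> Itv y q" "j \<in> Itv q x" using median_exists V pq by blast
  have jV: "j \<in> V" using j interval_subset_V by auto
  have "j \<in> Itv x q" using j interval_sym V pq by auto
  then have jI: "j \<in> Itv p q" "x \<in> Itv p j" using interval_shrink[OF pq xy(1)] by auto
  have "y \<in> Itv p j" using interval_shrink[OF pq xy(2) j(2)] by auto
  then have "sep p x \<subseteq> sep p j" "sep p y \<subseteq> sep p j"
    using sep_interval(1)[OF pq(1) jV jI(2)] sep_interval(1)[OF pq(1) jV] by auto
  moreover have "sep p j \<subseteq> sep p x \<union> sep p y"
  proof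
    fix H assume H: "H \<in> sep p j"
    show "H \<in> sep p x \<union> sep p y"
    proof (rule ccontr)
      assume "H \<notin> sep p x \<union> sep p y"
      then have "H \<in> sep x j" "y \<notin> H" using H by (auto simp: sep_def)
      then show False using sep_interval[OF V j(1)] by (auto simp: sep_def)
    qed
  qed
  ultimately show ?thesis using jI by blast
qed

lemma interval_join_family:
  assumes pq: "p \<in> V" "q \<in> V" and "finite S" and "\<forall>i\<in>S. x i \<in> Itv p q"
  shows "\<exists>z\<in>Itv p q. sep p z = (\<Union>i\<in>S. sep p (x i))"
  using assms(3,4)
proof (induction S rule: finite_induct)
  case empty
  then show ?case using interval_left[OF pq] sep_self by auto
next
  case (insert i S)
  then obtain z where z: "z \<in> Itv p q" "sep p z = (\<Union>i\<in>S. sep p (x i))" by auto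
  moreover obtain j where "j \<in> Itv p q" "sep p j = sep p z \<union> sep p (x i)"
    using interval_join[OF pq z(1), of "x i"] insert.prems by blast
  ultimately show ?case by (intro bexI[of _ j]) auto
qed

text \<open>A family of vertices whose separator sets (from \<open>v\<close>) are the images \<open>h ` S\<close> of all
  subsets \<open>S\<close> of \<open>{..<m}\<close> under an injective labelling \<open>h\<close> forms an \<open>m\<close>-cube, since
  distances are sizes of symmetric differences.\<close>

lemma cube_from_sep_labels:
  assumes v: "v \<in> V" and h: "inj_on h {..<m}"
    and f: "\<And>S. S \<subseteq> {..<m} \<Longrightarrow> f S \<in> V \<and> sep v (f S) = h ` S"
  shows "cube_subgraph_map V E m f"
  unfolding cube_subgraph_map_def
proof (intro conjI ballI impI)
  show "inj_on f (cube_verts m)"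
  proof
    fix A B assume AB: "A \<in> cube_verts m" "B \<in> cube_verts m" "f A = f B"
    then have sub: "A \<subseteq> {..<m}" "B \<subseteq> {..<m}" by (simp_all add: cube_verts_def)
    have "h ` A = sep v (f A)" using f[OF sub(1)] by simp
    also have "\<dots> = h ` B" using f[OF sub(2)] AB(3) by simp
    finally show "A = B" using inj_on_image_eq_iff[OF h sub] by (rule iffD1[rotated])
  qed
  show "f ` cube_verts m \<subseteq> V" using f unfolding cube_verts_def by blast
  fix A B assume AB: "A \<in> cube_verts m" "B \<in> cube_verts m" "cube_adj A B"
  then have sub: "A \<subseteq> {..<m}" "B \<subseteq> {..<m}" by (simp_all add: cube_verts_def)
  have diff: "h ` (A - B) = h ` A - h ` B" "h ` (B - A) = h ` B - h ` A"
    using inj_on_image_set_diff[OF h, of A B] inj_on_image_set_diff[OF h, of B A] sub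
    by (meson Diff_subset subset_trans)+
  have "d (f A) (f B) = card ((h ` A - h ` B) \<union> (h ` B - h ` A))"
    using dist_sep_symdiff[OF v] f[OF sub(1)] f[OF sub(2)] by simp
  also have "\<dots> = card (h ` ((A - B) \<union> (B - A)))"
    by (simp add: image_Un diff)
  also have "\<dots> = card ((A - B) \<union> (B - A))"
    using inj_on_subset[OF h, of "(A - B) \<union> (B - A)"] sub by (auto intro: card_image)
  also have "\<dots> = 1" using AB(3) unfolding cube_adj_def .
  finally have "d (f A) (f B) = 1" .
  moreover have "f A \<in> V" "f B \<in> V" using f[OF sub(1)] f[OF sub(2)] by simp_all
  ultimately show "E (f A) (f B)" using dist_1_adj by blast
qed

text \<open>The cube vertex for \<open>S\<close> is the join of the \<open>y i\<close>, \<open>i \<in> S\<close>.\<close>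

theorem neighbours_span_cube:
  assumes vq: "v \<in> V" "q \<in> V" and inj: "inj_on y {..<m}"
    and y: "\<forall>i<m. E v (y i) \<and> y i \<in> Itv v q"
  shows "\<exists>f. cube_subgraph_map V E m f \<and> f ` cube_verts m \<subseteq> Itv v q \<and>
               v \<in> f ` cube_verts m \<and> (\<forall>i<m. y i \<in> f ` cube_verts m)"
proof -
  have yV: "y i \<in> V" if "i < m" for i using y that adj_in_V by blast
  define h where "h i = the_elem (sep v (y i))" for i
  have sep_y: "sep v (y i) = {h i}" if "i < m" for i
  proof -
    have "card (sep v (y i)) = 1" using sep_card[OF vq(1) yV[OF that]] dist_adj y that by simp
    then show ?thesis unfolding h_def by (metis card_1_singletonE the_elem_eq)
  qed
  have h: "inj_on h {..<m}"
  proof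
    fix i j assume ij: "i \<in> {..<m}" "j \<in> {..<m}" "h i = h j"
    then have "sep v (y i) = sep v (y j)" using sep_y by auto
    then have "y i = y j" using sep_inj[OF vq(1) yV yV] ij by blast
    then show "i = j" using inj ij inj_onD by metis
  qed
  define f where "f S = (SOME z. z \<in> Itv v q \<and> sep v z = (\<Union>i\<in>S. sep v (y i)))" for S
  have fS: "f S \<in> Itv v q \<and> sep v (f S) = h ` S" if "S \<subseteq> {..<m}" for S
  proof -
    have "finite S" using that finite_subset by blast
    then have "\<exists>z. z \<in> Itv v q \<and> sep v z = (\<Union>i\<in>S. sep v (y i))"
      using interval_join_family[OF vq, of S y] y that by auto
    then have "f S \<in> Itv v q \<and> sep v (f S) = (\<Union>i\<in>S. sep v (y i))"
      unfolding f_def by (rule someI_ex)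
    then show ?thesis using sep_y that by auto
  qed
  have fV: "f S \<in> V" if "S \<subseteq> {..<m}" for S using fS[OF that] interval_subset_V by auto
  have "cube_subgraph_map V E m f" using cube_from_sep_labels[OF vq(1) h] fS fV by blast
  moreover have "f ` cube_verts m \<subseteq> Itv v q" using fS by (auto simp: cube_verts_def)
  moreover have "f {} = v" using sep_inj[OF vq(1) fV[of "{}"] vq(1)] fS[of "{}"] sep_self by auto
  moreover have "y i = f {i}" if "i < m" for i
    using sep_inj[OF vq(1) fV[of "{i}"] yV[OF that]] fS[of "{i}"] sep_y[OF that] that by auto
  ultimately show ?thesis by (intro exI[of _ f]) (auto simp: cube_verts_def intro!: image_eqI)
qed

end

section \<open>Dilworth's theorem\<close>

text \<open>Orders are given relationally on a carrier set, as they will be applied to the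
  half-spaces of an interval ordered by reverse inclusion.\<close>

definition porder :: "('b \<Rightarrow> 'b \<Rightarrow> bool) \<Rightarrow> 'b set \<Rightarrow> bool" where
  "porder le P \<longleftrightarrow> (\<forall>x\<in>P. le x x) \<and> (\<forall>x\<in>P. \<forall>y\<in>P. \<forall>z\<in>P. le x y \<longrightarrow> le y z \<longrightarrow> le x z)
     \<and> (\<forall>x\<in>P. \<forall>y\<in>P. le x y \<longrightarrow> le y x \<longrightarrow> x = y)"

definition antichain :: "('b \<Rightarrow> 'b \<Rightarrow> bool) \<Rightarrow> 'b set \<Rightarrow> bool" where
  "antichain le A \<longleftrightarrow> (\<forall>x\<in>A. \<forall>y\<in>A. le x y \<longrightarrow> x = y)"

definition width_le :: "('b \<Rightarrow> 'b \<Rightarrow> bool) \<Rightarrow> 'b set \<Rightarrow> nat \<Rightarrow> bool" where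
  "width_le le P w \<longleftrightarrow> (\<forall>A\<subseteq>P. antichain le A \<longrightarrow> card A \<le> w)"

definition chain_cover :: "('b \<Rightarrow> 'b \<Rightarrow> bool) \<Rightarrow> 'b set \<Rightarrow> nat \<Rightarrow> ('b \<Rightarrow> nat) \<Rightarrow> bool" where
  "chain_cover le P w col \<longleftrightarrow>
     (\<forall>x\<in>P. col x < w) \<and> (\<forall>x\<in>P. \<forall>y\<in>P. col x = col y \<longrightarrow> le x y \<or> le y x)"

lemma porder_subset: "porder le P \<Longrightarrow> Q \<subseteq> P \<Longrightarrow> porder le Q"
  unfolding porder_def by blast

lemma width_le_subset: "width_le le P w \<Longrightarrow> Q \<subseteq> P \<Longrightarrow> width_le le Q w"
  unfolding width_le_def by blast

text \<open>A finite nonempty poset has a maximal element (one with most elements below it).\<close>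

lemma maximal_element:
  assumes "finite S" "S \<noteq> {}" "porder le S"
  shows "\<exists>m\<in>S. \<forall>z\<in>S. le m z \<longrightarrow> z = m"
proof -
  define below where "below z = card {y\<in>S. le y z}" for z
  obtain s where "s \<in> S" using assms by auto
  have "\<forall>z. z \<in> S \<longrightarrow> below z < Suc (card S)"
    unfolding below_def using assms(1) by (auto intro!: le_imp_less_Suc card_mono)
  then obtain m where m: "m \<in> S" "\<forall>z. z \<in> S \<longrightarrow> below z \<le> below m"
    using ex_has_greatest_nat[of "\<lambda>z. z \<in> S", OF \<open>s \<in> S\<close>] by blast
  have "z = m" if z: "z \<in> S" "le m z" for z
  proof (rule ccontr)
    assume "z \<noteq> m"
    then have "{y\<in>S. le y m} \<subset> {y\<in>S. le y z}"
      using assms(3) z m unfolding porder_def by blast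
    then have "below m < below z" unfolding below_def using assms(1) by (simp add: psubset_card_mono)
    then show False using m z by force
  qed
  then show ?thesis using m by blast
qed

lemma chain_cover_add_chain:
  assumes "chain_cover le (P - K) w col" and "\<forall>x\<in>K. \<forall>y\<in>K. le x y \<or> le y x"
  shows "chain_cover le P (Suc w) (\<lambda>z. if z \<in> K then w else col z)"
  unfolding chain_cover_def
proof (intro conjI ballI impI)
  fix x assume "x \<in> P"
  then show "(if x \<in> K then w else col x) < Suc w"
    using assms(1) unfolding chain_cover_def by (simp add: less_SucI)
next
  fix x y assume "x \<in> P" "y \<in> P" "(if x \<in> K then w else col x) = (if y \<in> K then w else col y)"
  then show "le x y \<or> le y x"
    using assms unfolding chain_cover_def by (auto split: if_splits)
qed

lemma antichain_meets_all_colours: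
  assumes "chain_cover le P w col" "B \<subseteq> P" "antichain le B" "card B = w" "finite P"
  shows "col ` B = {..<w}"
proof -
  have "inj_on col B"
    using assms(1-3) unfolding chain_cover_def antichain_def inj_on_def by blast
  then have "card (col ` B) = card {..<w}" using assms(4) by (simp add: card_image)
  moreover have "col ` B \<subseteq> {..<w}" using assms(1,2) unfolding chain_cover_def by auto
  ultimately show ?thesis by (metis card_subset_eq finite_lessThan)
qed

lemma tops_of_maximum_antichains:
  assumes fin: "finite P" and po: "porder le P" and cov: "chain_cover le P w col"
    and M: "M = {B. B \<subseteq> P \<and> antichain le B \<and> card B = w}" "M \<noteq> {}"
  obtains x where "\<And>i. i < w \<Longrightarrow> x i \<in> \<Union>M \<and> col (x i) = i"
    "\<And>i z. i < w \<Longrightarrow> z \<in> \<Union>M \<Longrightarrow> col z = i \<Longrightarrow> le z (x i)"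
    "\<And>i j. i < w \<Longrightarrow> j < w \<Longrightarrow> le (x i) (x j) \<Longrightarrow> i = j"
proof -
  have hits: "\<exists>y\<in>B. col y = i" if "B \<in> M" "i < w" for B i
  proof -
    have "col ` B = {..<w}"
      using antichain_meets_all_colours[OF cov _ _ _ fin] \<open>B \<in> M\<close> M(1) by simp
    then have "i \<in> col ` B" using \<open>i < w\<close> by simp
    then show ?thesis by (auto simp: image_iff)
  qed
  define Z where "Z i = {z \<in> \<Union>M. col z = i}" for i
  have ZP: "Z i \<subseteq> P" for i using M(1) Z_def by auto
  have "\<exists>t. t \<in> Z i \<and> (\<forall>z\<in>Z i. le z t)" if i: "i < w" for i
  proof -
    obtain B where "B \<in> M" using M(2) by blast
    then obtain y where "y \<in> B" "col y = i" using hits i by blast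
    then have "Z i \<noteq> {}" using \<open>B \<in> M\<close> unfolding Z_def by blast
    then obtain t where t: "t \<in> Z i" "\<forall>z\<in>Z i. le t z \<longrightarrow> z = t"
      using maximal_element[OF finite_subset[OF ZP fin] _ porder_subset[OF po ZP]] by blast
    have inZ: "u \<in> P \<and> col u = i" if "u \<in> Z i" for u using that ZP unfolding Z_def by auto
    have "le z t" if z: "z \<in> Z i" for z
    proof -
      have "z \<in> P" "t \<in> P" "col z = col t" using inZ z t(1) by auto
      then have "le z t \<or> le t z" using cov unfolding chain_cover_def by blast
      moreover have "le t t" using po \<open>t \<in> P\<close> unfolding porder_def by blast
      ultimately show ?thesis using t(2) z by blast
    qed
    then show ?thesis using t by blast
  qed
  then obtain x where x: "\<forall>i\<in>{..<w}. x i \<in> Z i \<and> (\<forall>z\<in>Z i. le z (x i))"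
    using bchoice[of "{..<w}" "\<lambda>i t. t \<in> Z i \<and> (\<forall>z\<in>Z i. le z t)"] by blast
  have xZ: "x i \<in> \<Union>M \<and> col (x i) = i" if "i < w" for i using x that unfolding Z_def by simp
  have top: "le z (x i)" if "i < w" "z \<in> \<Union>M" "col z = i" for i z
    using x that unfolding Z_def by simp
  have trans: "le u v \<Longrightarrow> le v r \<Longrightarrow> le u r" if "u \<in> P" "v \<in> P" "r \<in> P" for u v r
    using po that unfolding porder_def by blast
  have UM: "\<Union>M \<subseteq> P" using M(1) by auto
  have xanti: "i = j" if ij: "i < w" "j < w" "le (x i) (x j)" for i j
  proof -
    obtain B where B: "B \<in> M" "x j \<in> B" using xZ[OF ij(2)] by blast
    obtain y where y: "y \<in> B" "col y = i" using hits[OF B(1) ij(1)] by blast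
    have BP: "B \<subseteq> P" "antichain le B" using B(1) M(1) by simp_all
    have "le y (x i)" using top[OF ij(1)] y B(1) by blast
    moreover have "y \<in> P" "x i \<in> P" "x j \<in> P" using BP(1) y(1) xZ ij UM by auto
    ultimately have "le y (x j)" using trans ij(3) by blast
    then have "y = x j" using BP(2) y(1) B(2) unfolding antichain_def by blast
    then show "i = j" using y(2) xZ[OF ij(2)] by simp
  qed
  show thesis by (rule that[OF xZ top xanti])
qed

text \<open>A maximal element \<open>a\<close> outside an antichain of \<open>w\<close> elements in a poset of width \<open>w\<close>
  must be comparable to, hence above, one of them.\<close>

lemma maximal_above_antichain:
  assumes po: "porder le P" and width: "width_le le P w"
    and a: "a \<in> P" "\<forall>z\<in>P. le a z \<longrightarrow> z = a"
    and x: "\<And>i. i < w \<Longrightarrow> x i \<in> P - {a}" "\<And>i j. i < w \<Longrightarrow> j < w \<Longrightarrow> le (x i) (x j) \<Longrightarrow> i = j"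
  shows "\<exists>i<w. le (x i) a"
proof -
  have "\<not> antichain le (insert a (x ` {..<w}))"
  proof
    assume "antichain le (insert a (x ` {..<w}))"
    moreover have "insert a (x ` {..<w}) \<subseteq> P" using a x(1) by auto
    ultimately have "card (insert a (x ` {..<w})) \<le> w" using width unfolding width_le_def by blast
    moreover have "inj_on x {..<w}"
    proof
      fix i j assume "i \<in> {..<w}" "j \<in> {..<w}" "x i = x j"
      moreover have "le (x i) (x i)" using po x(1) \<open>i \<in> {..<w}\<close> unfolding porder_def by blast
      ultimately show "i = j" using x(2) by (metis lessThan_iff)
    qed
    then have "card (x ` {..<w}) = w" by (simp add: card_image)
    moreover have "a \<notin> x ` {..<w}" using x(1) by auto
    ultimately show False by simp
  qed
  then obtain u v where uv: "u \<in> insert a (x ` {..<w})" "v \<in> insert a (x ` {..<w})"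
    "le u v" "u \<noteq> v"
    unfolding antichain_def by blast
  have "u \<noteq> a" using uv a x(1) by auto
  then obtain i where i: "i < w" "u = x i" using uv(1) by auto
  have "v \<notin> x ` {..<w}" using uv i x(2) by auto
  then show ?thesis using uv i by auto
qed

text \<open>The inductive step of Dilworth's theorem when removing a maximal element \<open>a\<close> does not
  lower the width \<open>w0 + 1\<close>: \<open>a\<close> lies above one of the tops \<open>x i\<close>, and the part of the
  \<open>i\<close>-th chain below \<open>x i\<close>, together with \<open>a\<close>, is a chain whose removal lowers the width.\<close>

lemma removable_chain:
  assumes fin: "finite P" and po: "porder le P" and width: "width_le le P (Suc w0)"
    and a: "a \<in> P" "\<forall>z\<in>P. le a z \<longrightarrow> z = a"
    and cov: "chain_cover le (P - {a}) (Suc w0) col"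
    and B: "B \<subseteq> P - {a}" "antichain le B" "card B = Suc w0"
  obtains K where "a \<in> K" "\<forall>u\<in>K. \<forall>v\<in>K. le u v \<or> le v u" "width_le le (P - K) w0"
proof -
  define w where "w = Suc w0"
  define P' where "P' = P - {a}"
  define M where "M = {B. B \<subseteq> P' \<and> antichain le B \<and> card B = w}"
  have fin': "finite P'" using fin unfolding P'_def by simp
  have po': "porder le P'" unfolding P'_def by (rule porder_subset[OF po]) auto
  have cov': "chain_cover le P' w col" using cov unfolding P'_def w_def .
  have trans: "le u r" if "u \<in> P" "v \<in> P" "r \<in> P" "le u v" "le v r" for u v r
    using po that unfolding porder_def by blast
  have "B \<in> M" using B unfolding M_def P'_def w_def by simp
  then have "M \<noteq> {}" by blast
  then obtain x where x: "\<And>i. i < w \<Longrightarrow> x i \<in> \<Union>M \<and> col (x i) = i"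
    "\<And>i z. i < w \<Longrightarrow> z \<in> \<Union>M \<Longrightarrow> col z = i \<Longrightarrow> le z (x i)"
    "\<And>i j. i < w \<Longrightarrow> j < w \<Longrightarrow> le (x i) (x j) \<Longrightarrow> i = j"
    using tops_of_maximum_antichains[OF fin' po' cov' M_def] by blast
  have xP': "x i \<in> P - {a}" if "i < w" for i using x(1)[OF that] unfolding M_def P'_def by auto
  have "\<exists>i<w. le (x i) a"
    using maximal_above_antichain[OF po _ a xP' x(3)] width unfolding w_def .
  then obtain i where i: "i < w" "le (x i) a" by blast
  define K where "K = insert a {z\<in>P'. col z = i \<and> le z (x i)}"
  have below_a: "le z a" if "z \<in> K" for z
  proof (cases "z = a")
    case True then show ?thesis using po a(1) unfolding porder_def by blast
  next
    case False
    then have "z \<in> P" "le z (x i)" using that unfolding K_def P'_def by auto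
    then show ?thesis using trans[of z "x i" a] xP'[OF i(1)] i(2) a(1) by blast
  qed
  have K_chain: "\<forall>u\<in>K. \<forall>v\<in>K. le u v \<or> le v u"
  proof (intro ballI)
    fix u v assume uv: "u \<in> K" "v \<in> K"
    show "le u v \<or> le v u"
    proof (cases "u = a \<or> v = a")
      case True then show ?thesis using below_a uv by blast
    next
      case False
      then have "u \<in> P'" "v \<in> P'" "col u = col v" using uv unfolding K_def by auto
      then show ?thesis using cov' unfolding chain_cover_def by blast
    qed
  qed
  have K_width: "width_le le (P - K) w0"
    unfolding width_le_def
  proof (intro allI impI)
    fix B' assume B': "B' \<subseteq> P - K" "antichain le B'"
    have "card B' \<le> w" using width B' w_def unfolding width_le_def by blast
    moreover have "card B' \<noteq> w"
    proof
      assume "card B' = w"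
      moreover have "B' \<subseteq> P'" using B'(1) unfolding K_def P'_def by auto
      ultimately have "B' \<in> M" "col ` B' = {..<w}"
        using B'(2) antichain_meets_all_colours[OF cov' _ B'(2) _ fin'] unfolding M_def by auto
      then obtain y where y: "y \<in> B'" "col y = i" using i(1) by (metis imageE lessThan_iff)
      then have "le y (x i)" using x(2)[OF i(1)] \<open>B' \<in> M\<close> by blast
      then have "y \<in> K" using y \<open>B' \<subseteq> P'\<close> unfolding K_def by blast
      then show False using y B'(1) by blast
    qed
    ultimately show "card B' \<le> w0" unfolding w_def by simp
  qed
  have "a \<in> K" unfolding K_def by simp
  then show thesis using K_chain K_width by (rule that)
qed

text \<open>Induction on the poset: remove a maximal element \<open>a\<close>; if the rest has smaller width,
  \<open>{a}\<close> becomes a new chain, otherwise a removable chain through \<open>a\<close> exists.\<close>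

theorem dilworth:
  assumes "finite P" "porder le P" "width_le le P w"
  shows "\<exists>col. chain_cover le P w col"
  using assms
proof (induction P arbitrary: w rule: finite_psubset_induct)
  case (psubset P)
  note po = psubset.prems(1) and width = psubset.prems(2)
  show ?case
  proof (cases "P = {}")
    case True then show ?thesis by (simp add: chain_cover_def)
  next
    case False
    obtain a where a: "a \<in> P" "\<forall>z\<in>P. le a z \<longrightarrow> z = a"
      using maximal_element[OF psubset.hyps(1) False po] by blast
    have P': "P - {a} \<subset> P" using a by auto
    have "card {a} \<le> w" using width a unfolding width_le_def antichain_def by blast
    then obtain w0 where w0: "w = Suc w0" by (cases w) auto
    have chainK: "\<exists>col. chain_cover le P w col"
      if K: "a \<in> K" "\<forall>u\<in>K. \<forall>v\<in>K. le u v \<or> le v u" "width_le le (P - K) w0" for K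
    proof -
      have "P - K \<subset> P" using K(1) a(1) by auto
      then obtain col where "chain_cover le (P - K) w0 col"
        using psubset.IH porder_subset[OF po] K(3) by blast
      then show ?thesis using chain_cover_add_chain[OF _ K(2)] w0 by blast
    qed
    show ?thesis
    proof (cases "width_le le (P - {a}) w0")
      case True
      moreover have "\<forall>u\<in>{a}. \<forall>v\<in>{a}. le u v \<or> le v u" using po a(1) unfolding porder_def by blast
      ultimately show ?thesis using chainK[of "{a}"] by blast
    next
      case False
      then obtain B where B: "B \<subseteq> P - {a}" "antichain le B" "\<not> card B \<le> w0"
        unfolding width_le_def by blast
      then have "card B = Suc w0" using width w0 unfolding width_le_def by (meson Diff_subset le_SucE subset_trans)
      moreover obtain col where "chain_cover le (P - {a}) w col"
        using psubset.IH[OF P' porder_subset[OF po] width_le_subset[OF width]] by blast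
      ultimately obtain K where "a \<in> K" "\<forall>u\<in>K. \<forall>v\<in>K. le u v \<or> le v u" "width_le le (P - K) w0"
        using removable_chain[OF psubset.hyps(1) po _ a _ B(1,2)] width w0 by blast
      then show ?thesis using chainK by blast
    qed
  qed
qed

section \<open>Distances in the grid\<close>

lemma l1_dist_change_coordinate:
  fixes x y w :: "nat \<Rightarrow> int"
  assumes "i < k" "\<forall>j. j \<noteq> i \<longrightarrow> x j = y j"
  shows "(\<Sum>j<k. nat \<bar>x j - w j\<bar>) + nat \<bar>y i - w i\<bar> = (\<Sum>j<k. nat \<bar>y j - w j\<bar>) + nat \<bar>x i - w i\<bar>"
proof -
  have "(\<Sum>j\<in>{..<k} - {i}. nat \<bar>x j - w j\<bar>) = (\<Sum>j\<in>{..<k} - {i}. nat \<bar>y j - w j\<bar>)"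
    using assms(2) by (intro sum.cong) auto
  then show ?thesis using assms(1) by (simp add: sum.remove)
qed

lemma card_symdiff_nested:
  assumes "finite X" "finite Y" "X \<subseteq> Y \<or> Y \<subseteq> X"
  shows "nat \<bar>int (card X) - int (card Y)\<bar> = card ((X - Y) \<union> (Y - X))"
  using assms(3)
proof
  assume XY: "X \<subseteq> Y"
  then have "(X - Y) \<union> (Y - X) = Y - X" by auto
  then show ?thesis using card_Diff_subset[OF assms(1) XY] card_mono[OF assms(2) XY] by simp
next
  assume YX: "Y \<subseteq> X"
  then have "(X - Y) \<union> (Y - X) = X - Y" by auto
  then show ?thesis using card_Diff_subset[OF assms(2) YX] card_mono[OF assms(1) YX] by simp
qed

lemma grid_dist:
  assumes u: "u \<in> grid_verts k" and w: "w \<in> grid_verts k"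
  shows "gdist (grid_verts k) (grid_adj k) u w = (\<Sum>i<k. nat \<bar>u i - w i\<bar>)"
proof (rule gdist_potential[where \<delta> = "\<lambda>x. \<Sum>i<k. nat \<bar>x i - w i\<bar>", OF w _ _ _ _ u])
  fix x y assume "grid_adj k x y"
  then obtain i where i: "i < k" "\<bar>x i - y i\<bar> = 1" "\<forall>j. j \<noteq> i \<longrightarrow> x j = y j"
    by (auto simp: grid_adj_def)
  have "nat \<bar>x i - w i\<bar> \<le> Suc (nat \<bar>y i - w i\<bar>)" using i(2) by arith
  then show "(\<Sum>j<k. nat \<bar>x j - w j\<bar>) \<le> Suc (\<Sum>j<k. nat \<bar>y j - w j\<bar>)"
    using l1_dist_change_coordinate[OF i(1,3), of w] by linarith
next
  fix x assume x: "x \<in> grid_verts k" and ne: "(\<Sum>i<k. nat \<bar>x i - w i\<bar>) \<noteq> 0"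
  then obtain i where i: "i < k" "x i \<noteq> w i" by auto
  define y where "y = x(i := x i + sgn (w i - x i))"
  have yg: "y \<in> grid_verts k" using x i by (auto simp: grid_verts_def y_def)
  have "\<bar>x i - y i\<bar> = 1" using i by (auto simp: y_def sgn_if)
  then have adj: "grid_adj k x y" using x yg i by (auto simp: grid_adj_def y_def)
  have "nat \<bar>x i - w i\<bar> = Suc (nat \<bar>y i - w i\<bar>)" using i by (auto simp: y_def sgn_if)
  moreover have "\<forall>j. j \<noteq> i \<longrightarrow> x j = y j" by (simp add: y_def)
  then have "(\<Sum>j<k. nat \<bar>x j - w j\<bar>) + nat \<bar>y i - w i\<bar> = (\<Sum>j<k. nat \<bar>y j - w j\<bar>) + nat \<bar>x i - w i\<bar>"
    by (rule l1_dist_change_coordinate[OF i(1)])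
  ultimately have "(\<Sum>j<k. nat \<bar>x j - w j\<bar>) = Suc (\<Sum>j<k. nat \<bar>y j - w j\<bar>)"
    by linarith
  then show "\<exists>y\<in>grid_verts k. grid_adj k x y \<and> (\<Sum>j<k. nat \<bar>x j - w j\<bar>) = Suc (\<Sum>j<k. nat \<bar>y j - w j\<bar>)"
    using yg adj by blast
next
  fix x assume x: "x \<in> grid_verts k" and z: "(\<Sum>i<k. nat \<bar>x i - w i\<bar>) = 0"
  show "x = w"
  proof
    fix i show "x i = w i"
      using z x w by (cases "i < k") (auto simp: grid_verts_def)
  qed
qed simp

section \<open>The poset of half-spaces separating \<open>p\<close> from \<open>q\<close>\<close>

locale median_interval = median +
  fixes p q
  assumes pV: "p \<in> V" and qV: "q \<in> V"
begin

abbreviation "I \<equiv> Itv p q"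
abbreviation "P \<equiv> sep p q"

text \<open>Half-spaces separating \<open>p\<close> from \<open>q\<close> are ordered by \<open>H' \<preceq> H\<close> iff every vertex of the
  interval lying in \<open>H\<close> also lies in \<open>H'\<close>: any geodesic from \<open>p\<close> crosses \<open>H'\<close> before \<open>H\<close>.\<close>

definition hs_le :: "'a set \<Rightarrow> 'a set \<Rightarrow> bool" where
  "hs_le H' H \<longleftrightarrow> (\<forall>x\<in>I. x \<in> H \<longrightarrow> x \<in> H')"

lemma interval_in_V: "x \<in> I \<Longrightarrow> x \<in> V"
  using interval_subset_V by auto

lemma mem_sep_base: "x \<in> I \<Longrightarrow> H \<in> P \<Longrightarrow> H \<in> sep p x \<longleftrightarrow> x \<in> H"
  by (auto simp: sep_def)

lemma sep_base_subset: "x \<in> I \<Longrightarrow> sep p x \<subseteq> P"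
  using sep_interval[OF pV qV] by blast

lemma finite_P: "finite P"
  using sep_finite pV qV by blast

text \<open>A vertex of \<open>I \<inter> H\<close> closest to \<open>p\<close> is a gate: it lies on a geodesic from \<open>p\<close> to
  every vertex of \<open>I \<inter> H\<close> (the median of \<open>p\<close>, \<open>m\<close>, \<open>z\<close> lies in \<open>H\<close> and is not closer).\<close>

lemma closest_vertex_is_gate:
  assumes H: "H \<in> halfspaces" and m: "m \<in> I" "m \<in> H"
    and closest: "\<forall>z\<in>I. z \<in> H \<longrightarrow> d p m \<le> d p z"
    and z: "z \<in> I" "z \<in> H"
  shows "m \<in> Itv p z"
proof -
  have mV: "m \<in> V" and zV: "z \<in> V" using m z interval_in_V by auto
  obtain \<mu> where mu: "\<mu> \<in> Itv p m" "\<mu> \<in> Itv m z" "\<mu> \<in> Itv z p"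
    using median_exists pV mV zV by blast
  have muV: "\<mu> \<in> V" using mu interval_subset_V by auto
  have "\<mu> \<in> H"
  proof (rule ccontr)
    assume "\<mu> \<notin> H"
    then have "H \<in> sep \<mu> m" using H m by (auto simp: sep_def)
    moreover have "\<mu> \<in> Itv z m" using mu(2) interval_sym mV zV by auto
    ultimately have "H \<in> sep z m" using sep_interval(1)[OF zV mV] by blast
    then show False using z by (auto simp: sep_def)
  qed
  moreover have "\<mu> \<in> I" using interval_subset(2)[OF pV qV m(1)] mu(1) by blast
  ultimately have "d p m \<le> d p \<mu>" using closest by blast
  moreover have "d p \<mu> + d \<mu> m = d p m" using mu(1) by (simp add: interval_def)
  ultimately have "\<mu> = m" using dist_eq_0D muV mV by simp
  then show ?thesis using mu(3) interval_sym pV zV by auto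
qed

lemma gate_of_halfspace:
  assumes H: "H \<in> P"
  obtains m where "m \<in> I" "m \<in> H" "sep p m = {H' \<in> P. hs_le H' H}"
    "\<forall>z\<in>I. z \<in> H \<longrightarrow> d p m \<le> d p z"
proof -
  have "q \<in> I" "q \<in> H" using interval_right[OF pV qV] H by (auto simp: sep_def)
  then obtain m where m: "m \<in> I" "m \<in> H" "\<forall>z. z \<in> I \<and> z \<in> H \<longrightarrow> d p m \<le> d p z"
    using ex_has_least_nat[of "\<lambda>z. z \<in> I \<and> z \<in> H" q "d p"] by blast
  have HS: "H \<in> halfspaces" using H by (auto simp: sep_def)
  have "sep p m = {H' \<in> P. hs_le H' H}"
  proof (intro equalityI subsetI)
    fix H' assume H': "H' \<in> sep p m"
    have "z \<in> H'" if "z \<in> I" "z \<in> H" for z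
    proof -
      have "m \<in> Itv p z" using closest_vertex_is_gate[OF HS m(1,2) _ that] m(3) by blast
      then have "H' \<in> sep p z" using sep_interval(1)[OF pV] that(1) interval_in_V H' by blast
      then show ?thesis by (simp add: sep_def)
    qed
    then show "H' \<in> {H' \<in> P. hs_le H' H}" using sep_base_subset[OF m(1)] H' by (auto simp: hs_le_def)
  next
    fix H' assume "H' \<in> {H' \<in> P. hs_le H' H}"
    then show "H' \<in> sep p m" using m mem_sep_base by (auto simp: hs_le_def)
  qed
  then show thesis using that m by blast
qed

text \<open>Antisymmetry: if \<open>H1\<close> and \<open>H2\<close> lie below each other, both separate the gate of \<open>H1\<close>
  from its predecessor on a geodesic from \<open>p\<close>, an edge, which crosses only one half-space.\<close>

lemma hs_le_antisym:
  assumes H1: "H1 \<in> P" and H2: "H2 \<in> P" and le: "hs_le H1 H2" "hs_le H2 H1"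
  shows "H1 = H2"
proof -
  obtain m where m: "m \<in> I" "m \<in> H1" "sep p m = {H' \<in> P. hs_le H' H1}"
    "\<forall>z\<in>I. z \<in> H1 \<longrightarrow> d p m \<le> d p z"
    using gate_of_halfspace[OF H1] by blast
  have mV: "m \<in> V" using m interval_in_V by auto
  have "m \<noteq> p" using m H1 by (auto simp: sep_def)
  then obtain m' where m': "E m m'" "m' \<in> Itv m p" using geodesic_step mV pV by blast
  have m'V: "m' \<in> V" using m' adj_in_V by auto
  have m'pm: "m' \<in> Itv p m" using m'(2) interval_sym mV pV by auto
  have m'I: "m' \<in> I" using interval_subset(2)[OF pV qV m(1)] m'pm by blast
  have "d p m' < d p m"
    using m'pm dist_adj[OF adj_sym[OF m'(1)]] by (simp add: interval_def)
  then have "m' \<notin> H1" "m' \<notin> H2" using m(4) m'I le(1) by (auto simp: hs_le_def)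
  moreover have "H1 \<in> sep p m" "H2 \<in> sep p m" using m(3) le(2) H1 H2 by (auto simp: hs_le_def)
  ultimately have "H1 \<in> sep m' m" "H2 \<in> sep m' m"
    using sep_interval(1)[OF pV mV m'pm] by (auto simp: sep_def)
  moreover have "card (sep m' m) = 1"
    using sep_card[OF m'V mV] dist_adj[OF adj_sym[OF m'(1)]] by simp
  ultimately show ?thesis by (metis card_1_singletonE singletonD)
qed

lemma porder_hs_le: "porder hs_le P"
  unfolding porder_def using hs_le_antisym by (auto simp: hs_le_def)

definition down_closed :: "'a set set \<Rightarrow> bool" where
  "down_closed S \<longleftrightarrow> S \<subseteq> P \<and> (\<forall>H\<in>S. \<forall>H'\<in>P. hs_le H' H \<longrightarrow> H' \<in> S)"

lemma down_closed_sep: "x \<in> I \<Longrightarrow> down_closed (sep p x)"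
  using sep_base_subset by (auto simp: down_closed_def hs_le_def sep_def)

text \<open>Conversely every down-set is realized by the join of the gates of its elements.\<close>

lemma down_closed_realized:
  assumes "down_closed S"
  shows "\<exists>z\<in>I. sep p z = S"
proof -
  have S: "S \<subseteq> P" using assms by (simp add: down_closed_def)
  have "\<exists>m. m \<in> I \<and> sep p m = {H' \<in> P. hs_le H' H}" if "H \<in> P" for H
    using gate_of_halfspace[OF that] by metis
  then obtain gate where gate: "\<And>H. H \<in> P \<Longrightarrow> gate H \<in> I \<and> sep p (gate H) = {H' \<in> P. hs_le H' H}"
    by metis
  have "finite S" using S finite_P finite_subset by blast
  then obtain z where z: "z \<in> I" "sep p z = (\<Union>H\<in>S. sep p (gate H))"
    using interval_join_family[OF pV qV, of S gate] gate S by blast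
  have "(\<Union>H\<in>S. sep p (gate H)) = S"
  proof
    show "(\<Union>H\<in>S. sep p (gate H)) \<subseteq> S" using gate S assms by (auto simp: down_closed_def)
    show "S \<subseteq> (\<Union>H\<in>S. sep p (gate H))" using gate S by (auto simp: hs_le_def)
  qed
  then show ?thesis using z by auto
qed

lemma one_more_halfspace:
  assumes v: "v \<in> I" and y: "y \<in> V" and H: "H \<in> P" "H \<notin> sep p v"
    and sy: "sep p y = insert H (sep p v)"
  shows "E v y \<and> y \<in> Itv v q"
proof -
  have vV: "v \<in> V" using v interval_in_V by auto
  have Pv: "sep p v \<subseteq> P" using sep_base_subset[OF v] .
  have "(sep p v - sep p y) \<union> (sep p y - sep p v) = {H}" using sy H(2) by auto
  then have d1: "d v y = 1" using dist_sep_symdiff[OF pV vV y] by simp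
  have "(sep p v - P) \<union> (P - sep p v) = P - sep p v" using Pv by auto
  then have d2: "d v q = card (P - sep p v)" using dist_sep_symdiff[OF pV vV qV] by simp
  have "(sep p y - P) \<union> (P - sep p y) = (P - sep p v) - {H}" using sy Pv H(1) by auto
  then have d3: "d y q = card ((P - sep p v) - {H})" using dist_sep_symdiff[OF pV y qV] by simp
  have "H \<in> P - sep p v" using H by simp
  then have "card ((P - sep p v) - {H}) + 1 = card (P - sep p v)"
    using finite_P card_Diff1_less[of "P - sep p v" H] by (simp add: card_Diff_singleton)
  then show ?thesis using d1 d2 d3 dist_1_adj[OF vV y d1] y by (simp add: interval_def)
qed

definition strictly_below :: "'a set set \<Rightarrow> 'a set set" where
  "strictly_below A = {H' \<in> P. \<exists>H\<in>A. hs_le H' H} - A"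

lemma down_closed_strictly_below:
  assumes AP: "A \<subseteq> P" and anti: "antichain hs_le A"
  shows "down_closed (strictly_below A)" "\<And>H. H \<in> A \<Longrightarrow> down_closed (insert H (strictly_below A))"
proof -
  have hs_trans: "hs_le a c" if "hs_le a b" "hs_le b c" for a b c
    using that by (auto simp: hs_le_def)
  have anti': "H' = H" if "H' \<in> A" "H \<in> A" "hs_le H' H" for H' H
    using anti that unfolding antichain_def by blast
  show dS0: "down_closed (strictly_below A)"
    unfolding down_closed_def
  proof (intro conjI ballI impI)
    show "strictly_below A \<subseteq> P" by (auto simp: strictly_below_def)
    fix H H' assume H: "H \<in> strictly_below A" and H': "H' \<in> P" "hs_le H' H"
    then obtain H0 where H0: "H0 \<in> A" "hs_le H H0" "H \<notin> A" "H \<in> P"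
      by (auto simp: strictly_below_def)
    have "hs_le H' H0" using hs_trans H'(2) H0(2) .
    moreover have "H' \<notin> A"
    proof
      assume "H' \<in> A"
      then have "H' = H0" using anti' H0(1) \<open>hs_le H' H0\<close> by blast
      then have "H = H'" using hs_le_antisym H0(4) H'(1) H'(2) H0(2) by blast
      then show False using H0(3) \<open>H' \<in> A\<close> by simp
    qed
    ultimately show "H' \<in> strictly_below A" using H'(1) H0(1) by (auto simp: strictly_below_def)
  qed
  fix H assume H: "H \<in> A"
  show "down_closed (insert H (strictly_below A))"
    unfolding down_closed_def
  proof (intro conjI ballI impI)
    show "insert H (strictly_below A) \<subseteq> P" using H AP dS0 by (auto simp: down_closed_def)
    fix B H' assume B: "B \<in> insert H (strictly_below A)" and H': "H' \<in> P" "hs_le H' B"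
    show "H' \<in> insert H (strictly_below A)"
    proof (cases "B = H")
      case True
      then show ?thesis using anti' H H' by (cases "H' \<in> A") (auto simp: strictly_below_def)
    next
      case False
      then show ?thesis using dS0 B H' by (auto simp: down_closed_def)
    qed
  qed
qed

text \<open>The width of the poset is at most \<open>k\<close>: an antichain \<open>A\<close> yields a vertex \<open>v\<close> (for the
  strict down-set below \<open>A\<close>) with \<open>|A|\<close> neighbours towards \<open>q\<close>, spanning an \<open>|A|\<close>-cube.\<close>

lemma width_le_cube_dim:
  assumes hk: "\<forall>m. has_cube I (induced_adj E I) m \<longrightarrow> m \<le> k"
  shows "width_le hs_le P k"
  unfolding width_le_def
proof (intro allI impI)
  fix A assume AP: "A \<subseteq> P" and anti: "antichain hs_le A"
  define S0 where "S0 = strictly_below A"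
  have dS0: "down_closed S0" and dH: "\<And>H. H \<in> A \<Longrightarrow> down_closed (insert H S0)"
    using down_closed_strictly_below[OF AP anti] unfolding S0_def by blast+
  obtain v where v: "v \<in> I" "sep p v = S0" using down_closed_realized[OF dS0] by blast
  have "\<exists>y\<in>I. sep p y = insert H S0" if "H \<in> A" for H using down_closed_realized[OF dH[OF that]] .
  then obtain yA where yA: "\<And>H. H \<in> A \<Longrightarrow> yA H \<in> I \<and> sep p (yA H) = insert H S0" by metis
  have finA: "finite A" using AP finite_P finite_subset by blast
  obtain e where e: "bij_betw e {..<card A} A"
    using ex_bij_betw_nat_finite[OF finA] by (auto simp: atLeast0LessThan)
  define y where "y i = yA (e i)" for i
  have eA: "e i \<in> A" "e i \<notin> S0" if "i < card A" for i
    using e that bij_betwE unfolding S0_def strictly_below_def by blast+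
  have y: "y i \<in> V" "sep p (y i) = insert (e i) S0" if "i < card A" for i
    using yA[OF eA(1)[OF that]] interval_in_V unfolding y_def by auto
  have nbr: "E v (y i) \<and> y i \<in> Itv v q" if "i < card A" for i
    using one_more_halfspace[OF v(1) y(1)[OF that]] AP eA[OF that] y(2)[OF that] v(2) by blast
  have "inj_on y {..<card A}"
  proof
    fix i j assume ij: "i \<in> {..<card A}" "j \<in> {..<card A}" "y i = y j"
    then have "insert (e i) S0 = insert (e j) S0" using y(2) by (metis lessThan_iff)
    then have "e i = e j" using eA ij by (metis insertE insertI1 lessThan_iff)
    then show "i = j" using e ij unfolding bij_betw_def by (meson inj_on_contraD)
  qed
  then obtain f where f: "cube_subgraph_map V E (card A) f" "f ` cube_verts (card A) \<subseteq> Itv v q"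
    using neighbours_span_cube[OF interval_in_V[OF v(1)] qV] nbr by blast
  have "Itv v q \<subseteq> I" using interval_subset(1)[OF pV qV v(1)] .
  then have "cube_subgraph_map I (induced_adj E I) (card A) f"
    using f unfolding cube_subgraph_map_def induced_adj_def by blast
  then show "card A \<le> k" using hk by (auto simp: has_cube_def)
qed

section \<open>The interval as an induced subgraph\<close>

text \<open>From any \<open>x \<in> I\<close> one can step inside \<open>I\<close> towards any other \<open>z \<in> I\<close>: go towards
  the median of \<open>p\<close>, \<open>x\<close>, \<open>z\<close>, or, if that is \<open>x\<close> itself, straight towards \<open>z\<close>.\<close>

lemma interval_geodesic_step:
  assumes x: "x \<in> I" and z: "z \<in> I" and "x \<noteq> z"
  shows "\<exists>y\<in>I. E x y \<and> y \<in> Itv x z"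
proof -
  have xV: "x \<in> V" and zV: "z \<in> V" using x z interval_in_V by auto
  obtain m where m: "m \<in> Itv p x" "m \<in> Itv x z" "m \<in> Itv z p" using median_exists pV xV zV by blast
  have mV: "m \<in> V" using m interval_subset_V by auto
  show ?thesis
  proof (cases "m = x")
    case False
    then obtain y where y: "E x y" "y \<in> Itv x m" using geodesic_step xV mV by metis
    have "y \<in> Itv x z" using interval_subset(2)[OF xV zV m(2)] y(2) by blast
    moreover have "y \<in> Itv m x" using y(2) interval_sym xV mV by auto
    then have "y \<in> Itv p x" using interval_subset(1)[OF pV xV m(1)] by blast
    then have "y \<in> I" using interval_subset(2)[OF pV qV x] by blast
    ultimately show ?thesis using y(1) by blast
  next
    case True
    then have xpz: "x \<in> Itv p z" using m(3) interval_sym pV zV by auto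
    obtain y where y: "E x y" "y \<in> Itv x z" using geodesic_step xV zV assms(3) by metis
    then have "y \<in> Itv p z" using interval_subset(1)[OF pV zV xpz] by blast
    then have "y \<in> I" using interval_subset(2)[OF pV qV z] by blast
    then show ?thesis using y by blast
  qed
qed

lemma induced_interval_dist:
  assumes a: "a \<in> I" and z: "z \<in> I"
  shows "gdist I (induced_adj E I) a z = d a z"
proof (rule gdist_potential[where \<delta> = "\<lambda>x. d x z", OF z _ _ _ _ a])
  fix x y assume "induced_adj E I x y"
  then show "d x z \<le> Suc (d y z)" using dist_adj_le z interval_in_V by (auto simp: induced_adj_def)
next
  fix x assume x: "x \<in> I" and ne: "d x z \<noteq> 0"
  then have "x \<noteq> z" using z interval_in_V by auto
  then obtain y where y: "y \<in> I" "E x y" "y \<in> Itv x z" using interval_geodesic_step x z by blast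
  then have "d x z = Suc (d y z)" using dist_adj[OF y(2)] by (simp add: interval_def)
  then show "\<exists>y\<in>I. induced_adj E I x y \<and> d x z = Suc (d y z)"
    using x y by (auto simp: induced_adj_def)
next
  fix x assume "x \<in> I" "d x z = 0"
  then show "x = z" using dist_eq_0D z interval_in_V by blast
next
  show "d z z = 0" using z interval_in_V by simp
qed

section \<open>Embedding the interval into the grid\<close>

text \<open>Within one chain of half-spaces the separator sets of two vertices are nested,
  because separator sets are down-sets.\<close>

lemma sep_chain_nested:
  assumes x: "x \<in> I" and y: "y \<in> I" and C: "\<forall>h1\<in>C. \<forall>h2\<in>C. hs_le h1 h2 \<or> hs_le h2 h1"
  shows "sep p x \<inter> C \<subseteq> sep p y \<inter> C \<or> sep p y \<inter> C \<subseteq> sep p x \<inter> C"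
proof (rule ccontr)
  assume "\<not> ?thesis"
  then obtain h1 h2 where h: "h1 \<in> sep p x" "h1 \<in> C" "h1 \<notin> sep p y"
    "h2 \<in> sep p y" "h2 \<in> C" "h2 \<notin> sep p x" by blast
  have "h1 \<in> P" "h2 \<in> P" using h sep_base_subset x y by auto
  then show False
    using C h down_closed_sep[OF x] down_closed_sep[OF y] unfolding down_closed_def by blast
qed

text \<open>Part (ii): with a cover of the poset by \<open>k\<close> chains (Dilworth), the \<open>i\<close>-th coordinate
  of \<open>x \<in> I\<close> counts the half-spaces of the \<open>i\<close>-th chain separating \<open>p\<close> from \<open>x\<close>.\<close>

theorem grid_embedding:
  assumes hk: "\<forall>m. has_cube I (induced_adj E I) m \<longrightarrow> m \<le> k"
  shows "\<exists>g. isometric_embedding I (induced_adj E I) (grid_verts k) (grid_adj k) g"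
proof -
  obtain col where col: "chain_cover hs_le P k col"
    using dilworth[OF finite_P porder_hs_le width_le_cube_dim[OF hk]] by blast
  define C where "C i = {H \<in> P. col H = i}" for i
  define g where "g x = (\<lambda>i. if i < k then int (card (sep p x \<inter> C i)) else 0)" for x
  have gG: "g ` I \<subseteq> grid_verts k" by (auto simp: g_def grid_verts_def)
  have "(\<Sum>i<k. nat \<bar>g a i - g b i\<bar>) = d a b" if ab: "a \<in> I" "b \<in> I" for a b
  proof -
    define D where "D = (sep p a - sep p b) \<union> (sep p b - sep p a)"
    have DP: "D \<subseteq> P" using sep_base_subset ab D_def by auto
    have coord: "nat \<bar>g a i - g b i\<bar> = card (D \<inter> C i)" if "i < k" for i
    proof -
      have "\<forall>h1\<in>C i. \<forall>h2\<in>C i. hs_le h1 h2 \<or> hs_le h2 h1"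
        using col unfolding chain_cover_def C_def by auto
      then have "nat \<bar>int (card (sep p a \<inter> C i)) - int (card (sep p b \<inter> C i))\<bar> = card (D \<inter> C i)"
        using card_symdiff_nested[OF _ _ sep_chain_nested[OF ab]] ab sep_finite pV interval_in_V
        unfolding D_def by (metis Diff_Int_distrib2 Int_Un_distrib2 finite_Int)
      then show ?thesis using that by (simp add: g_def)
    qed
    have "D = (\<Union>i<k. D \<inter> C i)" using DP col unfolding C_def chain_cover_def by auto
    moreover have "finite D" using DP finite_P finite_subset by blast
    then have "card (\<Union>i<k. D \<inter> C i) = (\<Sum>i<k. card (D \<inter> C i))"
      by (intro card_UN_disjoint) (auto simp: C_def)
    ultimately have "card D = (\<Sum>i<k. card (D \<inter> C i))" by simp
    also have "\<dots> = (\<Sum>i<k. nat \<bar>g a i - g b i\<bar>)" using coord by simp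
    finally show ?thesis using dist_sep_symdiff[OF pV] ab interval_in_V D_def by simp
  qed
  then have "isometric_embedding I (induced_adj E I) (grid_verts k) (grid_adj k) g"
    using gG grid_dist induced_interval_dist unfolding isometric_embedding_def by (simp add: image_subset_iff)
  then show ?thesis by blast
qed

end

theorem mainTheorem6:
  fixes V :: "'a set" and E :: "'a \<Rightarrow> 'a \<Rightarrow> bool" and p q :: 'a and k :: nat
  assumes "median_graph V E"
    and "p \<in> V" and "q \<in> V"
    and "has_cube (interval V E p q) (induced_adj E (interval V E p q)) k"
    and "\<forall>m. has_cube (interval V E p q) (induced_adj E (interval V E p q)) m \<longrightarrow> m \<le> k"
  shows "(\<forall>v m y. v \<in> interval V E p q \<and> inj_on y {..<m} \<and>
            (\<forall>i<m. E v (y i) \<and> y i \<in> interval V E v q) \<longrightarrow>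
            (\<exists>f. cube_subgraph_map V E m f \<and> f ` cube_verts m \<subseteq> interval V E v q \<and>
                 v \<in> f ` cube_verts m \<and> (\<forall>i<m. y i \<in> f ` cube_verts m)))
       \<and> (\<exists>g. isometric_embedding (interval V E p q) (induced_adj E (interval V E p q))
                 (grid_verts k) (grid_adj k) g)"
proof -
  interpret median_interval V E p q
    using assms(1-3) by unfold_locales auto
  show ?thesis
  proof (intro conjI allI impI)
    fix v and m :: nat and y :: "nat \<Rightarrow> 'a"
    assume "v \<in> I \<and> inj_on y {..<m} \<and> (\<forall>i<m. E v (y i) \<and> y i \<in> Itv v q)"
    then show "\<exists>f. cube_subgraph_map V E m f \<and> f ` cube_verts m \<subseteq> Itv v q \<and>
                 v \<in> f ` cube_verts m \<and> (\<forall>i<m. y i \<in> f ` cube_verts m)"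
      using neighbours_span_cube[OF interval_in_V qV] by (elim conjE) blast
  next
    show "\<exists>g. isometric_embedding I (induced_adj E I) (grid_verts k) (grid_adj k) g"
      by (rule grid_embedding[OF assms(5)])
  qed
qed

end
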